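(* Let $\mathcal P$ be a non-degenerate polar space of finite rank $n\ge2$ with no thin lines, and let $C=(X_\delta)_{\delta\le\omega}$ be a well ordered chain of nice subspaces of $\mathcal P$ (indexed by the ordinals $\delta\le\omega$, increasing) with $X_\omega=\mathcal P$. The following are equivalent: (a) $C$ is maximal among well ordered chains of $\mathfrak N(\mathcal P)$; (b) $C$ is maximal among all chains of $\mathfrak N(\mathcal P)$; (c) all the following hold: (1) $\langle F\rangle_{\mathcal P}=X_0$ for every frame $F$ of $X_0$; (2) for every $\delta<\omega$, $X_\delta$ is a maximal proper subspace of $X_{\delta+1}$; (3) for every limit ordinal $\gamma\le\omega$, $X_\gamma=\bigcup_{\delta<\gamma}X_\delta$.
   Context: A point-line geometry with each two points on at most one line; a subspace is a set of points containing every line meeting it in $\ge2$ points; $\langle S\rangle_{\mathcal P}$ is the smallest subspace containing $S$. Collinearity is written $\perp$. Singular subspaces are subspaces whose points are pairwise collinear (projective spaces); rank of $\mathcal P$ is the maximal projective rank (dimension $+1$) of a singular subspace. A nice subspace is a subspace containing two mutually disjoint maximal singular subspaces (equivalently $\mathcal P$ induces on it a non-degenerate polar space of rank $n$); $\mathfrak N(\mathcal P)$ is the set of nice subspaces ordered by inclusion. A frame is a pair of bases $\{p_1,\dots,p_n\}$, $\{p'_1,\dots,p'_n\}$ of two disjoint maximal singular subspaces with $p_i\perp p'_j$ iff $i\ne j$. *)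

theory Defs
  imports Main
begin

definition point_line_geometry :: "'p set \<Rightarrow> 'p set set \<Rightarrow> bool" where
  "point_line_geometry P L \<longleftrightarrow>
     (\<forall>l\<in>L. l \<subseteq> P \<and> (\<exists>a b. a \<in> l \<and> b \<in> l \<and> a \<noteq> b)) \<and>
     (\<forall>l\<in>L. \<forall>m\<in>L. \<forall>a b. a \<noteq> b \<and> a \<in> l \<and> b \<in> l \<and> a \<in> m \<and> b \<in> m \<longrightarrow> l = m)"

text \<open>Collinearity (a point is collinear with itself).\<close>
definition perp :: "'p set \<Rightarrow> 'p set set \<Rightarrow> 'p \<Rightarrow> 'p \<Rightarrow> bool" where
  "perp P L p q \<longleftrightarrow> p \<in> P \<and> q \<in> P \<and> (p = q \<or> (\<exists>l\<in>L. p \<in> l \<and> q \<in> l))"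

definition polar_space :: "'p set \<Rightarrow> 'p set set \<Rightarrow> bool" where
  "polar_space P L \<longleftrightarrow> point_line_geometry P L \<and>
     (\<forall>p\<in>P. \<forall>l\<in>L. (\<exists>!q. q \<in> l \<and> perp P L p q) \<or> (\<forall>q\<in>l. perp P L p q))"

definition non_degenerate :: "'p set \<Rightarrow> 'p set set \<Rightarrow> bool" where
  "non_degenerate P L \<longleftrightarrow> \<not> (\<exists>p\<in>P. \<forall>q\<in>P. perp P L p q)"

definition thin_line :: "'p set \<Rightarrow> bool" where
  "thin_line l \<longleftrightarrow> card l = 2"

definition subspace :: "'p set \<Rightarrow> 'p set set \<Rightarrow> 'p set \<Rightarrow> bool" where
  "subspace P L S \<longleftrightarrow> S \<subseteq> P \<and>
     (\<forall>l\<in>L. (\<exists>a b. a \<noteq> b \<and> a \<in> l \<and> b \<in> l \<and> a \<in> S \<and> b \<in> S) \<longrightarrow> l \<subseteq> S)"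

definition span :: "'p set \<Rightarrow> 'p set set \<Rightarrow> 'p set \<Rightarrow> 'p set" where
  "span P L S = \<Inter> {T. subspace P L T \<and> S \<subseteq> T}"

definition singular_subspace :: "'p set \<Rightarrow> 'p set set \<Rightarrow> 'p set \<Rightarrow> bool" where
  "singular_subspace P L S \<longleftrightarrow> subspace P L S \<and> (\<forall>p\<in>S. \<forall>q\<in>S. perp P L p q)"

text \<open>Projective rank (dimension + 1) of a subspace: the least size of a
generating set.\<close>
definition proj_rank :: "'p set \<Rightarrow> 'p set set \<Rightarrow> 'p set \<Rightarrow> nat \<Rightarrow> bool" where
  "proj_rank P L S k \<longleftrightarrow>
     (\<exists>T. T \<subseteq> S \<and> finite T \<and> card T = k \<and> span P L T = S) \<and>
     (\<forall>T. T \<subseteq> S \<and> finite T \<and> span P L T = S \<longrightarrow> k \<le> card T)"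

definition polar_rank :: "'p set \<Rightarrow> 'p set set \<Rightarrow> nat \<Rightarrow> bool" where
  "polar_rank P L n \<longleftrightarrow>
     (\<forall>S. singular_subspace P L S \<longrightarrow> (\<exists>k\<le>n. proj_rank P L S k)) \<and>
     (\<exists>S. singular_subspace P L S \<and> proj_rank P L S n)"

definition max_singular :: "'p set \<Rightarrow> 'p set set \<Rightarrow> 'p set \<Rightarrow> bool" where
  "max_singular P L M \<longleftrightarrow> singular_subspace P L M \<and>
     (\<forall>M'. singular_subspace P L M' \<and> M \<subseteq> M' \<longrightarrow> M' = M)"

definition nice_subspace :: "'p set \<Rightarrow> 'p set set \<Rightarrow> 'p set \<Rightarrow> bool" where
  "nice_subspace P L X \<longleftrightarrow> subspace P L X \<and>
     (\<exists>M1 M2. max_singular P L M1 \<and> max_singular P L M2 \<and> M1 \<subseteq> X \<and> M2 \<subseteq> X \<and> M1 \<inter> M2 = {})"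

definition is_basis :: "'p set \<Rightarrow> 'p set set \<Rightarrow> 'p set \<Rightarrow> 'p set \<Rightarrow> bool" where
  "is_basis P L M B \<longleftrightarrow> B \<subseteq> M \<and> span P L B = M \<and> (\<forall>b\<in>B. b \<notin> span P L (B - {b}))"

definition is_frame :: "'p set \<Rightarrow> 'p set set \<Rightarrow> nat \<Rightarrow> 'p set \<Rightarrow> (nat \<Rightarrow> 'p) \<Rightarrow> (nat \<Rightarrow> 'p) \<Rightarrow> bool" where
  "is_frame P L n X p p' \<longleftrightarrow>
     (\<exists>M1 M2. max_singular P L M1 \<and> max_singular P L M2 \<and> M1 \<subseteq> X \<and> M2 \<subseteq> X \<and> M1 \<inter> M2 = {} \<and>
        inj_on p {..<n} \<and> inj_on p' {..<n} \<and>
        is_basis P L M1 (p ` {..<n}) \<and> is_basis P L M2 (p' ` {..<n}) \<and>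
        (\<forall>i<n. \<forall>j<n. perp P L (p i) (p' j) \<longleftrightarrow> i \<noteq> j))"

definition nice_chain :: "'p set \<Rightarrow> 'p set set \<Rightarrow> 'p set set \<Rightarrow> bool" where
  "nice_chain P L C \<longleftrightarrow> (\<forall>X\<in>C. nice_subspace P L X) \<and> (\<forall>X\<in>C. \<forall>Y\<in>C. X \<subseteq> Y \<or> Y \<subseteq> X)"

definition wo_nice_chain :: "'p set \<Rightarrow> 'p set set \<Rightarrow> 'p set set \<Rightarrow> bool" where
  "wo_nice_chain P L C \<longleftrightarrow> nice_chain P L C \<and>
     (\<forall>D. D \<subseteq> C \<and> D \<noteq> {} \<longrightarrow> (\<exists>X\<in>D. \<forall>Y\<in>D. X \<subseteq> Y))"

end

theory Submission
  imports Defs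
begin

text \<open>
  A nice subspace Z that could be added to the well ordered chain C is strictly comparable with all
  members. If some member lies below Z, then Z sits either just below a successor member, excluded
  by (2), or below a limit member, excluded by (3). Otherwise Z lies below the least member X0; a
  frame of Z is then a frame of X0, so by (1) it spans X0, although it spans a subspace of Z.
  Conversely, each failing condition produces an addable nice subspace: the span of a frame, an
  intermediate subspace, or the union of the members below a limit. The geometric input is that
  any two disjoint maximal singular subspaces carry a frame: a partial frame that cannot be
  extended spans both of them, and cutting down by the perps of its pairs, one pair at a time,
  shows that every singular subspace is spanned by as many points as the frame has pairs, so its
  length is the rank n.
\<close>

section \<open>Basic geometry of a non-degenerate polar space\<close>

locale nondegenerate_polar_space =
  fixes P :: "'p set" and L :: "'p set set"
  assumes polar: "polar_space P L" and nondegenerate: "non_degenerate P L"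
begin

abbreviation collinear :: "'p \<Rightarrow> 'p \<Rightarrow> bool" (infix "\<perp>" 50)
  where "x \<perp> y \<equiv> perp P L x y"

lemma line_subset: "l \<in> L \<Longrightarrow> l \<subseteq> P"
  using polar unfolding polar_space_def point_line_geometry_def by blast

lemma line_two_points: "l \<in> L \<Longrightarrow> \<exists>a b. a \<in> l \<and> b \<in> l \<and> a \<noteq> b"
  using polar unfolding polar_space_def point_line_geometry_def by blast

lemma collinear_sym: "x \<perp> y \<Longrightarrow> y \<perp> x"
  unfolding perp_def by blast

lemma collinear_points: "x \<perp> y \<Longrightarrow> x \<in> P \<and> y \<in> P"
  unfolding perp_def by blast

lemma collinear_refl: "x \<in> P \<Longrightarrow> x \<perp> x"
  unfolding perp_def by blast

lemma collinear_on_line: "l \<in> L \<Longrightarrow> a \<in> l \<Longrightarrow> b \<in> l \<Longrightarrow> a \<perp> b"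
  unfolding perp_def using line_subset by blast

lemma line_through: "a \<perp> b \<Longrightarrow> a \<noteq> b \<Longrightarrow> \<exists>l\<in>L. a \<in> l \<and> b \<in> l"
  unfolding perp_def by blast

lemma one_or_all: "x \<in> P \<Longrightarrow> l \<in> L \<Longrightarrow> (\<exists>!q. q \<in> l \<and> x \<perp> q) \<or> (\<forall>q\<in>l. x \<perp> q)"
  using polar unfolding polar_space_def by blast

lemma line_has_collinear_point: "x \<in> P \<Longrightarrow> l \<in> L \<Longrightarrow> \<exists>q\<in>l. x \<perp> q"
  using one_or_all line_two_points by metis

lemma collinear_line_if_two:
  assumes "l \<in> L" "a \<in> l" "b \<in> l" "a \<noteq> b" "x \<perp> a" "x \<perp> b" "c \<in> l"
  shows "x \<perp> c"
proof -
  have "\<not> (\<exists>!q. q \<in> l \<and> x \<perp> q)" using assms by (metis ex1E)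
  then show ?thesis using one_or_all[of x l] assms collinear_points by blast
qed

lemma exists_noncollinear: "c \<in> P \<Longrightarrow> \<exists>z\<in>P. \<not> z \<perp> c"
  using nondegenerate collinear_sym unfolding non_degenerate_def by blast

definition perp_set :: "'p set \<Rightarrow> 'p set" where
  "perp_set A = {x \<in> P. \<forall>a\<in>A. a \<perp> x}"

lemma subspace_perp_set: "subspace P L (perp_set A)"
  unfolding subspace_def
proof (intro conjI ballI impI)
  fix l assume l: "l \<in> L" and "\<exists>a b. a \<noteq> b \<and> a \<in> l \<and> b \<in> l \<and> a \<in> perp_set A \<and> b \<in> perp_set A"
  then obtain a b where "a \<noteq> b" "a \<in> l" "b \<in> l" "a \<in> perp_set A" "b \<in> perp_set A" by blast
  then show "l \<subseteq> perp_set A"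
    using collinear_line_if_two[OF l] line_subset[OF l] unfolding perp_set_def by blast
qed (auto simp: perp_set_def)

lemma subspace_points: "subspace P L P"
  unfolding subspace_def using line_subset by blast

lemma subspace_Int: "subspace P L A \<Longrightarrow> subspace P L B \<Longrightarrow> subspace P L (A \<inter> B)"
  unfolding subspace_def by blast

lemma subspace_line:
  "subspace P L S \<Longrightarrow> l \<in> L \<Longrightarrow> a \<in> l \<Longrightarrow> b \<in> l \<Longrightarrow> a \<noteq> b \<Longrightarrow> a \<in> S \<Longrightarrow> b \<in> S \<Longrightarrow> l \<subseteq> S"
  unfolding subspace_def by blast

lemma subspace_subset: "subspace P L S \<Longrightarrow> S \<subseteq> P"
  unfolding subspace_def by blast

lemma subspace_span:
  assumes "S \<subseteq> P"
  shows "subspace P L (span P L S)"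
  unfolding subspace_def
proof (intro conjI ballI impI)
  show "span P L S \<subseteq> P" unfolding span_def using subspace_points assms by blast
  fix l assume l: "l \<in> L" and "\<exists>a b. a \<noteq> b \<and> a \<in> l \<and> b \<in> l \<and> a \<in> span P L S \<and> b \<in> span P L S"
  then obtain a b where "a \<noteq> b" "a \<in> l" "b \<in> l" "a \<in> span P L S" "b \<in> span P L S" by blast
  then show "l \<subseteq> span P L S" unfolding span_def using subspace_line[OF _ l] by blast
qed

lemma span_superset: "S \<subseteq> span P L S"
  unfolding span_def by blast

lemma span_least: "subspace P L T \<Longrightarrow> S \<subseteq> T \<Longrightarrow> span P L S \<subseteq> T"
  unfolding span_def by blast

lemma span_mono: "S \<subseteq> S' \<Longrightarrow> span P L S \<subseteq> span P L S'"
  unfolding span_def by blast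

lemma span_empty: "span P L {} = {}"
  using span_least[of "{}" "{}"] unfolding subspace_def by blast

lemma span_perp_set: "S \<subseteq> perp_set A \<Longrightarrow> span P L S \<subseteq> perp_set A"
  by (rule span_least[OF subspace_perp_set])

definition pairwise_collinear :: "'p set \<Rightarrow> bool" where
  "pairwise_collinear S \<longleftrightarrow> S \<subseteq> P \<and> (\<forall>x\<in>S. \<forall>y\<in>S. x \<perp> y)"

lemma pairwise_collinear_subset: "pairwise_collinear A \<Longrightarrow> B \<subseteq> A \<Longrightarrow> pairwise_collinear B"
  unfolding pairwise_collinear_def by blast

lemma pairwise_collinear_insert:
  assumes "pairwise_collinear S" "a \<in> P" "\<forall>x\<in>S. a \<perp> x"
  shows "pairwise_collinear (insert a S)"
  unfolding pairwise_collinear_def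
proof (intro conjI ballI)
  show "insert a S \<subseteq> P" using assms unfolding pairwise_collinear_def by blast
  fix x y assume "x \<in> insert a S" "y \<in> insert a S"
  then show "x \<perp> y"
    using assms collinear_refl[of a] collinear_sym[of a] unfolding pairwise_collinear_def by blast
qed

lemma pairwise_collinear_span:
  assumes "pairwise_collinear K"
  shows "pairwise_collinear (span P L K)"
proof -
  have KP: "K \<subseteq> P" using assms pairwise_collinear_def by blast
  have "K \<subseteq> perp_set K" using assms unfolding pairwise_collinear_def perp_set_def by blast
  then have span_perp: "span P L K \<subseteq> perp_set K" by (rule span_perp_set)
  have "span P L K \<subseteq> perp_set {y}" if y: "y \<in> span P L K" for y
  proof (rule span_perp_set)
    show "K \<subseteq> perp_set {y}"
      using span_perp y KP collinear_sym unfolding perp_set_def by blast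
  qed
  moreover have "span P L K \<subseteq> P" by (rule span_least[OF subspace_points KP])
  ultimately show ?thesis unfolding pairwise_collinear_def perp_set_def by blast
qed

lemma singular_subspace_iff: "singular_subspace P L S \<longleftrightarrow> subspace P L S \<and> pairwise_collinear S"
  unfolding singular_subspace_def pairwise_collinear_def using subspace_subset by blast

lemma singular_span_insert:
  assumes "pairwise_collinear T" "a \<in> P" "\<forall>x\<in>T. a \<perp> x"
  shows "singular_subspace P L (span P L (insert a T))"
proof -
  have "pairwise_collinear (insert a T)" using pairwise_collinear_insert[OF assms] .
  moreover have "insert a T \<subseteq> P" using calculation unfolding pairwise_collinear_def by blast
  ultimately show ?thesis unfolding singular_subspace_iff using pairwise_collinear_span subspace_span by blast
qed

lemma max_singular_subspace: "max_singular P L M \<Longrightarrow> subspace P L M \<and> pairwise_collinear M"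
  unfolding max_singular_def singular_subspace_iff by blast

lemma max_singular_absorb:
  assumes M: "max_singular P L M" and x: "x \<in> P" and coll: "\<forall>m\<in>M. m \<perp> x"
  shows "x \<in> M"
proof -
  have M_sub: "subspace P L M" and M_coll: "pairwise_collinear M"
    using max_singular_subspace[OF M] by blast+
  have "\<forall>m\<in>M. x \<perp> m" using coll collinear_sym by blast
  then have "singular_subspace P L (span P L (insert x M))" by (rule singular_span_insert[OF M_coll x])
  moreover have "M \<subseteq> span P L (insert x M)" using span_superset by blast
  ultimately have "span P L (insert x M) = M" using M max_singular_def by blast
  then show ?thesis using span_superset[of "insert x M"] by blast
qed

lemma max_singular_perp_span:
  assumes M: "max_singular P L M" and sp: "M \<subseteq> span P L B" and x: "x \<in> P"
    and coll: "\<forall>b\<in>B. b \<perp> x"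
  shows "x \<in> M"
proof -
  have "B \<subseteq> perp_set {x}" using coll x collinear_sym collinear_points unfolding perp_set_def by blast
  then have "M \<subseteq> perp_set {x}" using span_perp_set sp by blast
  then have "\<forall>m\<in>M. m \<perp> x" unfolding perp_set_def using collinear_sym by blast
  then show ?thesis by (rule max_singular_absorb[OF M x])
qed

section \<open>Generators of singular subspaces\<close>

lemma subspace_separates_points_of_line:
  assumes Q: "subspace P L Q" and l: "l \<in> L" "l \<subseteq> Q" and ab: "a \<in> l" "b \<in> l" "a \<noteq> b"
    and nonrad: "\<And>c. c \<in> l \<Longrightarrow> \<exists>z\<in>Q. \<not> z \<perp> c"
  shows "\<exists>v\<in>Q. v \<perp> a \<and> \<not> v \<perp> b"
proof -
  have QP: "Q \<subseteq> P" using subspace_subset[OF Q] .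
  have aP: "a \<in> P" using ab l QP by blast
  obtain p1 where p1: "p1 \<in> Q" "\<not> p1 \<perp> a" using nonrad ab by blast
  have p1P: "p1 \<in> P" using p1 QP by blast
  obtain c1 where c1: "c1 \<in> l" "p1 \<perp> c1" using line_has_collinear_point[OF p1P l(1)] by blast
  obtain q1 where q1: "q1 \<in> Q" "\<not> q1 \<perp> c1" using nonrad c1 by blast
  have q1P: "q1 \<in> P" using q1 QP by blast
  obtain d where d: "d \<in> l" "q1 \<perp> d" using line_has_collinear_point[OF q1P l(1)] by blast
  have dc1: "d \<noteq> c1" using q1 d by auto
  have p1c1: "p1 \<noteq> c1" using p1(2) collinear_on_line[OF l(1) c1(1) ab(1)] by auto
  obtain M where M: "M \<in> L" "p1 \<in> M" "c1 \<in> M" using line_through[OF c1(2) p1c1] by blast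
  have MQ: "M \<subseteq> Q" using subspace_line[OF Q M(1) M(2) M(3) p1c1] p1 c1 l by blast
  obtain e where e: "e \<in> M" "q1 \<perp> e" using line_has_collinear_point[OF q1P M(1)] by blast
  have ec1: "e \<noteq> c1" using q1 e by auto
  have q1e: "q1 \<noteq> e" using q1(2) collinear_on_line[OF M(1) e(1) M(3)] by auto
  obtain N where N: "N \<in> L" "q1 \<in> N" "e \<in> N" using line_through[OF e(2) q1e] by blast
  have NQ: "N \<subseteq> Q" using subspace_line[OF Q N(1) N(2) N(3) q1e] q1 e MQ by blast
  obtain v where v: "v \<in> N" "a \<perp> v" using line_has_collinear_point[OF aP N(1)] by blast
  have "\<not> v \<perp> b"
  proof
    assume vb: "v \<perp> b"
    \<comment> \<open>then v is collinear with all of l, which propagates via N and M to a \<perp> p1\<close>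
    have vl: "\<And>c. c \<in> l \<Longrightarrow> v \<perp> c"
      using collinear_line_if_two[OF l(1) ab] collinear_sym[OF v(2)] vb by blast
    have vq1: "v \<noteq> q1" using vl[OF c1(1)] q1(2) by blast
    have "d \<perp> e"
      using collinear_line_if_two[OF N(1) N(2) v(1) vq1[symmetric] collinear_sym[OF d(2)]
          collinear_sym[OF vl[OF d(1)]] N(3)] .
    then have el: "\<And>c. c \<in> l \<Longrightarrow> e \<perp> c"
      using collinear_line_if_two[OF l(1) c1(1) d(1) dc1[symmetric] collinear_on_line[OF M(1) e(1) M(3)]]
        collinear_sym by blast
    have "a \<perp> p1"
      using collinear_line_if_two[OF M(1) e(1) M(3) ec1 collinear_sym[OF el[OF ab(1)]]
          collinear_on_line[OF l(1) ab(1) c1(1)] M(2)] .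
    then show False using p1(2) collinear_sym by blast
  qed
  then show ?thesis using v NQ collinear_sym by blast
qed

text \<open>The radical of R \<inter> perp_set W lies in W.\<close>
definition radical_within :: "'p set \<Rightarrow> 'p set \<Rightarrow> bool" where
  "radical_within R W \<longleftrightarrow> (\<forall>r \<in> R \<inter> perp_set W. r \<notin> W \<longrightarrow> (\<exists>y \<in> R \<inter> perp_set W. \<not> y \<perp> r))"

lemma radical_within_empty:
  assumes tq: "q \<in> P" "\<not> t \<perp> q"
  shows "radical_within (perp_set {t,q}) {}"
  unfolding radical_within_def
proof (intro ballI impI)
  fix r assume "r \<in> perp_set {t,q} \<inter> perp_set {}"
  then have r: "r \<in> P" "t \<perp> r" "q \<perp> r" unfolding perp_set_def by auto
  have tr: "t \<noteq> r" using r(3) tq(2) collinear_sym by blast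
  obtain K1 where K1: "K1 \<in> L" "t \<in> K1" "r \<in> K1" using line_through[OF r(2) tr] by blast
  have "\<exists>v\<in>P. v \<perp> t \<and> \<not> v \<perp> r"
    using subspace_separates_points_of_line[OF subspace_points K1(1) line_subset[OF K1(1)] K1(2,3) tr]
      exists_noncollinear line_subset[OF K1(1)] by blast
  then obtain z where z: "z \<in> P" "z \<perp> t" "\<not> z \<perp> r" by blast
  have zt: "t \<noteq> z" using z r by blast
  obtain K where K: "K \<in> L" "t \<in> K" "z \<in> K" using line_through[OF collinear_sym[OF z(2)] zt] by blast
  obtain y where y: "y \<in> K" "q \<perp> y" using line_has_collinear_point[OF tq(1) K(1)] by blast
  have yt: "y \<noteq> t" using y tq(2) collinear_sym by blast
  have yR: "y \<in> perp_set {t,q} \<inter> perp_set {}"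
    unfolding perp_set_def using collinear_on_line[OF K(1) K(2) y(1)] y collinear_points by blast
  have "\<not> y \<perp> r"
  proof
    assume "y \<perp> r"
    then have "r \<perp> z"
      using collinear_line_if_two[OF K(1) K(2) y(1) yt[symmetric] collinear_sym[OF r(2)]] K(3)
        collinear_sym by blast
    then show False using z(3) collinear_sym by blast
  qed
  then show "\<exists>y\<in>perp_set {t, q} \<inter> perp_set {}. \<not> y \<perp> r" using yR by blast
qed

lemma span_subspace: "subspace P L S \<Longrightarrow> span P L S = S"
  using span_least[of S S] span_superset[of S] by blast

lemma radical_within_insert_new:
  assumes R: "subspace P L R" and W0: "subspace P L W0" "W0 \<subseteq> R" "radical_within R W0"
    and s: "s \<in> R" "s \<notin> W0" and W: "pairwise_collinear (span P L (insert s W0))"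
  shows "radical_within R (span P L (insert s W0))"
  unfolding radical_within_def
proof (intro ballI impI)
  define W where "W = span P L (insert s W0)"
  define Q where "Q = R \<inter> perp_set W0"
  have RP: "R \<subseteq> P" using subspace_subset[OF R] .
  have sW0P: "insert s W0 \<subseteq> P" using s W0(2) RP by blast
  have subW: "subspace P L W" unfolding W_def using subspace_span[OF sW0P] .
  have W0W: "W0 \<subseteq> W" and sW: "s \<in> W" unfolding W_def using span_superset by blast+
  have subQ: "subspace P L Q" unfolding Q_def by (rule subspace_Int[OF R subspace_perp_set])
  fix r assume "r \<in> R \<inter> perp_set (span P L (insert s W0))" "r \<notin> span P L (insert s W0)"
  then have rW: "r \<in> R" "\<forall>w\<in>W. w \<perp> r" "r \<notin> W" unfolding W_def perp_set_def by auto
  have rQ: "r \<in> Q" unfolding Q_def perp_set_def using rW W0W RP by blast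
  have "\<forall>w\<in>W0. w \<perp> s" using W W0W sW unfolding W_def pairwise_collinear_def by blast
  then have sQ: "s \<in> Q" unfolding Q_def perp_set_def using s RP by blast
  have rs: "r \<noteq> s" using sW rW by blast
  have "r \<perp> s" using rW(2) sW collinear_sym by blast
  then obtain l where l: "l \<in> L" "r \<in> l" "s \<in> l" using line_through[OF _ rs] by blast
  have lQ: "l \<subseteq> Q" using subspace_line[OF subQ l rs rQ sQ] .
  have nonrad: "\<exists>z\<in>Q. \<not> z \<perp> c" if c: "c \<in> l" for c
  proof -
    have "c \<notin> W0"
    proof
      assume cin: "c \<in> W0"
      then have "c \<noteq> s" using s(2) by blast
      then have "l \<subseteq> W" using subspace_line[OF subW l(1) c l(3)] cin W0W sW by blast
      then show False using l rW by blast
    qed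
    moreover have "c \<in> R \<inter> perp_set W0" using c lQ unfolding Q_def by blast
    ultimately show ?thesis using W0(3) unfolding radical_within_def Q_def by blast
  qed
  obtain v where v: "v \<in> Q" "v \<perp> s" "\<not> v \<perp> r"
    using subspace_separates_points_of_line[OF subQ l(1) lQ l(3) l(2) rs[symmetric] nonrad] by blast
  have "\<forall>w\<in>insert s W0. v \<perp> w" using v collinear_sym unfolding Q_def perp_set_def by auto
  then have "insert s W0 \<subseteq> perp_set {v}" using sW0P unfolding perp_set_def by blast
  then have "W \<subseteq> perp_set {v}" unfolding W_def by (rule span_perp_set)
  then have "v \<in> perp_set W" using v(1) collinear_sym unfolding Q_def perp_set_def by blast
  then show "\<exists>y\<in>R \<inter> perp_set (span P L (insert s W0)). \<not> y \<perp> r"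
    using v(1,3) unfolding Q_def W_def by blast
qed

lemma radical_within_insert:
  assumes R: "subspace P L R" and W0: "subspace P L W0" "W0 \<subseteq> R" "radical_within R W0"
    and s: "s \<in> R" and W: "pairwise_collinear (span P L (insert s W0))"
  shows "radical_within R (span P L (insert s W0))"
proof (cases "s \<in> W0")
  case True
  then show ?thesis using W0(3) span_subspace[OF W0(1)] by (simp add: insert_absorb)
next
  case False
  then show ?thesis by (rule radical_within_insert_new[OF R W0 s _ W])
qed

lemma span_insert_span:
  assumes "insert s T \<subseteq> P"
  shows "span P L (insert s (span P L T)) = span P L (insert s T)"
proof
  have "insert s (span P L T) \<subseteq> span P L (insert s T)"
    using span_superset[of "insert s T"] span_mono[of T "insert s T"] by blast
  then show "span P L (insert s (span P L T)) \<subseteq> span P L (insert s T)"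
    by (rule span_least[OF subspace_span[OF assms]])
  show "span P L (insert s T) \<subseteq> span P L (insert s (span P L T))"
    using span_superset[of T] by (intro span_mono) blast
qed

lemma radical_within_span:
  assumes tq: "q \<in> P" "\<not> t \<perp> q" and T: "finite T" "T \<subseteq> perp_set {t,q}"
    and coll: "pairwise_collinear (span P L T)"
  shows "radical_within (perp_set {t,q}) (span P L T)"
  using T coll
proof (induction T rule: finite_induct)
  case empty
  then show ?case using radical_within_empty[OF tq] span_empty by simp
next
  case (insert s T0)
  have RP: "perp_set {t,q} \<subseteq> P" unfolding perp_set_def by blast
  have s: "s \<in> perp_set {t,q}" and T0: "T0 \<subseteq> perp_set {t,q}" using insert.prems(1) by blast+
  have T0P: "T0 \<subseteq> P" and sT0P: "insert s T0 \<subseteq> P" using s T0 RP by blast+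
  have "pairwise_collinear (span P L T0)"
    using pairwise_collinear_subset[OF insert.prems(2)] span_mono[of T0 "insert s T0"] by blast
  then have "radical_within (perp_set {t,q}) (span P L T0)" using insert.IH T0 by blast
  moreover have "pairwise_collinear (span P L (insert s (span P L T0)))"
    using insert.prems(2) span_insert_span[OF sT0P] by simp
  ultimately have "radical_within (perp_set {t,q}) (span P L (insert s (span P L T0)))"
    using radical_within_insert[OF subspace_perp_set subspace_span[OF T0P] span_perp_set[OF T0] _ s]
    by blast
  then show ?case using span_insert_span[OF sT0P] by simp
qed

lemma span_insert_inter_perp_subset:
  assumes tq: "t \<in> P" "q \<in> P" "\<not> t \<perp> q" and T: "finite T" "T \<subseteq> perp_set {t,q}"
    and coll: "pairwise_collinear (span P L T)"
  shows "{x \<in> span P L (insert t T). q \<perp> x} \<subseteq> span P L T"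
proof
  define R where "R = perp_set {t,q}"
  define W where "W = span P L T"
  define V where "V = perp_set (insert t (W \<union> (R \<inter> perp_set W)))"
  have WR: "W \<subseteq> R" unfolding W_def R_def using span_perp_set[OF T(2)] .
  have TW: "T \<subseteq> W" unfolding W_def by (rule span_superset)
  have "t \<in> V"
  proof -
    have "\<forall>w\<in>W \<union> (R \<inter> perp_set W). t \<perp> w" using WR unfolding R_def perp_set_def by blast
    then show ?thesis using tq(1) collinear_refl collinear_sym unfolding V_def perp_set_def by blast
  qed
  moreover have "x \<in> V" if x: "x \<in> T" for x
  proof -
    have "x \<in> P" "t \<perp> x" using x T(2) unfolding perp_set_def by blast+
    moreover have "\<forall>w\<in>W. w \<perp> x" using coll x TW unfolding W_def pairwise_collinear_def by blast
    moreover have "\<forall>y\<in>perp_set W. y \<perp> x" using x TW collinear_sym unfolding perp_set_def by blast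
    ultimately show ?thesis unfolding V_def perp_set_def by blast
  qed
  ultimately have "insert t T \<subseteq> V" by blast
  then have span_V: "span P L (insert t T) \<subseteq> V" unfolding V_def by (rule span_perp_set)
  fix x assume "x \<in> {x \<in> span P L (insert t T). q \<perp> x}"
  then have x: "x \<in> V" "q \<perp> x" using span_V by auto
  then have xR: "x \<in> R \<inter> perp_set W" and xY: "\<forall>y\<in>R \<inter> perp_set W. y \<perp> x"
    unfolding V_def R_def perp_set_def by auto
  have "radical_within R W"
    unfolding R_def W_def using radical_within_span[OF tq(2,3) T coll] .
  then show "x \<in> span P L T" using xR xY unfolding radical_within_def W_def by blast
qed

lemma singular_subspace_generated_by_hyperplane:
  assumes S: "subspace P L S" "pairwise_collinear S" and s: "s \<in> S" and q: "q \<in> P" "\<not> q \<perp> s"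
  shows "S \<subseteq> span P L ({x\<in>S. q \<perp> x} \<union> {s})"
proof
  fix x assume x: "x \<in> S"
  let ?A = "{x\<in>S. q \<perp> x} \<union> {s}"
  have "?A \<subseteq> P" using subspace_subset[OF S(1)] s by blast
  then have sub_A: "subspace P L (span P L ?A)" by (rule subspace_span)
  show "x \<in> span P L ?A"
  proof (cases "x = s")
    case True then show ?thesis using span_superset by blast
  next
    case False
    have "s \<perp> x" using S(2) s x unfolding pairwise_collinear_def by blast
    then obtain l where l: "l \<in> L" "s \<in> l" "x \<in> l" using line_through False by blast
    have lS: "l \<subseteq> S" using subspace_line[OF S(1) l] False s x by blast
    obtain y where y: "y \<in> l" "q \<perp> y" using line_has_collinear_point[OF q(1) l(1)] by blast
    have ys: "y \<noteq> s" using y q(2) by blast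
    have "y \<in> span P L ?A" "s \<in> span P L ?A" using y lS span_superset[of ?A] by blast+
    then have "l \<subseteq> span P L ?A" using subspace_line[OF sub_A l(1) y(1) l(2) ys] by blast
    then show ?thesis using l(3) by blast
  qed
qed

lemma span_insert_line_points:
  assumes T: "T \<subseteq> P" "t \<in> T"
    and f: "\<And>x. x \<in> T - {t} \<Longrightarrow> \<exists>l\<in>L. t \<in> l \<and> x \<in> l \<and> f x \<in> l \<and> f x \<noteq> t \<and> f x \<in> span P L T"
  shows "span P L (insert t (f ` (T - {t}))) = span P L T"
proof
  define I where "I = insert t (f ` (T - {t}))"
  have sub_S: "subspace P L (span P L T)" by (rule subspace_span[OF T(1)])
  have TS: "T \<subseteq> span P L T" by (rule span_superset)
  have IS: "I \<subseteq> span P L T" unfolding I_def using f T(2) TS by blast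
  then have "I \<subseteq> P" using subspace_subset[OF sub_S] by blast
  then have sub_I: "subspace P L (span P L I)" by (rule subspace_span)
  have "x \<in> span P L I" if x: "x \<in> T" for x
  proof (cases "x = t")
    case True then show ?thesis using span_superset unfolding I_def by blast
  next
    case False
    then obtain l where l: "l \<in> L" "t \<in> l" "x \<in> l" "f x \<in> l" "f x \<noteq> t" using f x by blast
    have "f x \<in> span P L I" "t \<in> span P L I" using span_superset[of I] x False unfolding I_def by blast+
    then show ?thesis using subspace_line[OF sub_I l(1) l(4) l(2) l(5)] l(3) by blast
  qed
  then have "T \<subseteq> span P L I" by blast
  then show "span P L T \<subseteq> span P L (insert t (f ` (T - {t})))"
    unfolding I_def[symmetric] by (rule span_least[OF sub_I])
  show "span P L (insert t (f ` (T - {t}))) \<subseteq> span P L T"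
    using IS unfolding I_def by (rule span_least[OF sub_S])
qed

text \<open>Replace every generator x other than t by the point where the line tx meets perp_set {q}.\<close>
lemma singular_span_exchange:
  assumes T: "finite T" "T \<subseteq> P" and coll: "pairwise_collinear (span P L T)"
    and q: "q \<in> P" and t: "t \<in> T" "\<not> q \<perp> t"
  shows "\<exists>T'. finite T' \<and> card T' < card T \<and> T' \<subseteq> span P L T \<inter> perp_set {t,q}
           \<and> span P L (insert t T') = span P L T"
proof -
  define S where "S = span P L T"
  have sub_S: "subspace P L S" unfolding S_def using subspace_span[OF T(2)] .
  have SP: "S \<subseteq> P" using subspace_subset[OF sub_S] .
  have TS: "T \<subseteq> S" unfolding S_def by (rule span_superset)
  have coll_S: "\<And>x y. x \<in> S \<Longrightarrow> y \<in> S \<Longrightarrow> x \<perp> y"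
    using coll unfolding S_def pairwise_collinear_def by blast
  have "\<forall>x\<in>T - {t}. \<exists>y. \<exists>l\<in>L. t \<in> l \<and> x \<in> l \<and> y \<in> l \<and> q \<perp> y"
  proof
    fix x assume x: "x \<in> T - {t}"
    then have "t \<perp> x" "t \<noteq> x" using coll_S t(1) TS by blast+
    then obtain l where l: "l \<in> L" "t \<in> l" "x \<in> l" using line_through by blast
    then show "\<exists>y. \<exists>l\<in>L. t \<in> l \<and> x \<in> l \<and> y \<in> l \<and> q \<perp> y"
      using line_has_collinear_point[OF q l(1)] by blast
  qed
  from bchoice[OF this] obtain f where f: "\<forall>x\<in>T - {t}. \<exists>l\<in>L. t \<in> l \<and> x \<in> l \<and> f x \<in> l \<and> q \<perp> f x"
    by blast
  define T' where "T' = f ` (T - {t})"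
  have f_line: "\<exists>l\<in>L. t \<in> l \<and> x \<in> l \<and> f x \<in> l \<and> f x \<noteq> t \<and> f x \<in> S \<and> q \<perp> f x"
    if x: "x \<in> T - {t}" for x
  proof -
    obtain l where l: "l \<in> L" "t \<in> l" "x \<in> l" "f x \<in> l" "q \<perp> f x" using f x by blast
    have "l \<subseteq> S" using subspace_line[OF sub_S l(1) l(2) l(3)] x t TS by blast
    then show ?thesis using l t(2) by blast
  qed
  have "card T' \<le> card (T - {t})" unfolding T'_def using T(1) by (intro card_image_le) blast
  also have "\<dots> < card T" by (rule card_Diff1_less[OF T(1) t(1)])
  finally have "card T' < card T" .
  moreover have "span P L (insert t T') = S"
    unfolding T'_def S_def using span_insert_line_points[OF T(2) t(1)] f_line unfolding S_def by blast
  moreover have "T' \<subseteq> S \<inter> perp_set {t,q}"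
  proof
    fix y assume "y \<in> T'"
    then obtain x where x: "x \<in> T - {t}" "y = f x" unfolding T'_def by blast
    then have "y \<in> S" "q \<perp> y" using f_line by blast+
    moreover have "t \<perp> y" using coll_S t(1) TS \<open>y \<in> S\<close> by blast
    ultimately show "y \<in> S \<inter> perp_set {t,q}" using SP unfolding perp_set_def by blast
  qed
  moreover have "finite T'" unfolding T'_def using T(1) by simp
  ultimately show ?thesis unfolding S_def by blast
qed

lemma hyperplane_section_fewer_generators:
  assumes T: "finite T" "T \<subseteq> P" and coll: "pairwise_collinear (span P L T)" and q: "q \<in> P"
    and x0: "x0 \<in> span P L T" "\<not> q \<perp> x0"
  shows "\<exists>T'. finite T' \<and> T' \<subseteq> P \<and> card T' < card T \<and> span P L T' = {x \<in> span P L T. q \<perp> x}"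
proof -
  obtain t where t: "t \<in> T" "\<not> q \<perp> t"
  proof (rule ccontr)
    assume "\<not> thesis"
    then have "T \<subseteq> perp_set {q}" using that T(2) unfolding perp_set_def by blast
    then show False using span_perp_set x0 unfolding perp_set_def by blast
  qed
  obtain T' where T': "finite T'" "card T' < card T" "T' \<subseteq> span P L T \<inter> perp_set {t,q}"
    "span P L (insert t T') = span P L T"
    using singular_span_exchange[OF T coll q t] by blast
  have T'P: "T' \<subseteq> P" using T'(3) unfolding perp_set_def by blast
  have "pairwise_collinear (span P L T')"
    using pairwise_collinear_subset[OF coll] span_least[OF subspace_span[OF T(2)]] T'(3) by blast
  then have "{x \<in> span P L T. q \<perp> x} \<subseteq> span P L T'"
    using span_insert_inter_perp_subset[of t q T'] T' t T(2) q collinear_sym by blast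
  moreover have "span P L T' \<subseteq> {x \<in> span P L T. q \<perp> x}"
    using span_perp_set[of T' "{q}"] span_least[OF subspace_span[OF T(2)]] T'(3)
    unfolding perp_set_def by blast
  ultimately show ?thesis using T'(1,2) T'P by blast
qed

section \<open>Frames of two disjoint maximal singular subspaces\<close>

definition frame_pattern :: "nat \<Rightarrow> (nat \<Rightarrow> 'p) \<Rightarrow> (nat \<Rightarrow> 'p) \<Rightarrow> bool" where
  "frame_pattern k p q \<longleftrightarrow> (\<forall>i<k. \<forall>j<k. p i \<perp> q j \<longleftrightarrow> i \<noteq> j)"

lemma frame_pattern_sym: "frame_pattern k p q \<Longrightarrow> frame_pattern k q p"
  unfolding frame_pattern_def using collinear_sym by blast

lemma frame_pattern_Suc:
  "frame_pattern (Suc k) p q \<longleftrightarrow>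
     frame_pattern k p q \<and> \<not> p k \<perp> q k \<and> (\<forall>i<k. p i \<perp> q k \<and> p k \<perp> q i)"
  unfolding frame_pattern_def less_Suc_eq by auto

lemma frame_pattern_length_le_card:
  assumes "finite T" "T \<subseteq> P" "pairwise_collinear (span P L T)"
    and "p ` {..<k} \<subseteq> span P L T" "q ` {..<k} \<subseteq> P" "frame_pattern k p q"
  shows "k \<le> card T"
  using assms
proof (induction k arbitrary: T)
  case 0 then show ?case by simp
next
  case (Suc k)
  have pat: "frame_pattern k p q" "\<not> p k \<perp> q k" "\<forall>i<k. p i \<perp> q k"
    using Suc.prems(6) unfolding frame_pattern_Suc by blast+
  have pk: "p k \<in> span P L T" and qk: "q k \<in> P" using Suc.prems(4,5) by auto
  have npk: "\<not> q k \<perp> p k" using pat(2) collinear_sym by blast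
  obtain T' where T': "finite T'" "T' \<subseteq> P" "card T' < card T"
    "span P L T' = {x \<in> span P L T. q k \<perp> x}"
    using hyperplane_section_fewer_generators[OF Suc.prems(1-3) qk pk npk] by blast
  have "\<forall>i<k. q k \<perp> p i" using pat(3) collinear_sym by blast
  then have "p ` {..<k} \<subseteq> span P L T'" using T'(4) Suc.prems(4) by auto
  moreover have "pairwise_collinear (span P L T')" using pairwise_collinear_subset[OF Suc.prems(3)] T'(4) by blast
  moreover have "q ` {..<k} \<subseteq> P" using Suc.prems(5) by auto
  ultimately have "k \<le> card T'" using Suc.IH[OF T'(1,2) _ _ _ pat(1)] by blast
  then show ?case using T'(3) by simp
qed

lemma singular_subspace_generated_by_pattern:
  assumes M: "subspace P L M" "pairwise_collinear M"
  shows "p ` {..<k} \<subseteq> M \<Longrightarrow> q ` {..<k} \<subseteq> P \<Longrightarrow> frame_pattern k p q \<Longrightarrow>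
    M \<subseteq> span P L ({x\<in>M. \<forall>i<k. q i \<perp> x} \<union> p ` {..<k})"
proof (induction k)
  case 0 then show ?case using span_superset by auto
next
  case (Suc k)
  define H where "H = {x\<in>M. \<forall>i<k. q i \<perp> x}"
  define B where "B = {x\<in>M. \<forall>i<Suc k. q i \<perp> x} \<union> p ` {..<Suc k}"
  have pat: "frame_pattern k p q" "\<not> p k \<perp> q k" "\<forall>i<k. p k \<perp> q i"
    using Suc.prems(3) unfolding frame_pattern_Suc by blast+
  have "p ` {..<k} \<subseteq> M" "q ` {..<k} \<subseteq> P" using Suc.prems(1,2) by auto
  then have IH: "M \<subseteq> span P L (H \<union> p ` {..<k})" unfolding H_def by (rule Suc.IH[OF _ _ pat(1)])
  have MP: "M \<subseteq> P" using subspace_subset[OF M(1)] .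
  have "H = M \<inter> perp_set (q ` {..<k})" unfolding H_def perp_set_def using MP by auto
  then have sub_H: "subspace P L H" using subspace_Int[OF M(1) subspace_perp_set] by simp
  have coll_H: "pairwise_collinear H" unfolding H_def by (rule pairwise_collinear_subset[OF M(2)]) blast
  have "\<forall>i<k. q i \<perp> p k" using pat(3) collinear_sym by blast
  then have pk: "p k \<in> H" unfolding H_def using Suc.prems(1) by auto
  have qk: "q k \<in> P" using Suc.prems(2) by auto
  have npk: "\<not> q k \<perp> p k" using pat(2) collinear_sym by blast
  have "B \<subseteq> M" unfolding B_def using Suc.prems(1) by blast
  then have sub_B: "subspace P L (span P L B)" using MP subspace_span by (meson order_trans)
  have "{x\<in>H. q k \<perp> x} \<union> {p k} \<subseteq> B" unfolding H_def B_def using less_Suc_eq by auto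
  then have "span P L ({x\<in>H. q k \<perp> x} \<union> {p k}) \<subseteq> span P L B" by (rule span_mono)
  then have "H \<subseteq> span P L B"
    using singular_subspace_generated_by_hyperplane[OF sub_H coll_H pk qk npk] by (rule order_trans[rotated])
  moreover have "p ` {..<k} \<subseteq> span P L B" using span_superset[of B] unfolding B_def by auto
  ultimately have "span P L (H \<union> p ` {..<k}) \<subseteq> span P L B" by (intro span_least[OF sub_B]) blast
  with IH have "M \<subseteq> span P L B" by (rule order_trans)
  then show ?case unfolding B_def .
qed

lemma frame_pattern_basis:
  assumes pat: "frame_pattern m p q"
  shows "inj_on p {..<m} \<and> is_basis P L (span P L (p ` {..<m})) (p ` {..<m})"
proof (intro conjI)
  have pat_iff: "p i \<perp> q j \<longleftrightarrow> i \<noteq> j" if "i < m" "j < m" for i j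
    using pat that unfolding frame_pattern_def by blast
  show "inj_on p {..<m}"
  proof (rule inj_onI, rule ccontr)
    fix i j assume "i \<in> {..<m}" "j \<in> {..<m}" "p i = p j" "i \<noteq> j"
    then show False using pat_iff[of i j] pat_iff[of j j] by simp
  qed
  show "is_basis P L (span P L (p ` {..<m})) (p ` {..<m})"
    unfolding is_basis_def
  proof (intro conjI ballI)
    fix b assume "b \<in> p ` {..<m}"
    then obtain i where i: "i < m" "b = p i" by auto
    have "p j \<in> perp_set {q i}" if "j < m" "p j \<noteq> b" for j
    proof -
      have "p j \<perp> q i" using pat_iff[of j i] that i by auto
      then show ?thesis using collinear_sym collinear_points unfolding perp_set_def by blast
    qed
    then have "p ` {..<m} - {b} \<subseteq> perp_set {q i}" by blast
    then have "span P L (p ` {..<m} - {b}) \<subseteq> perp_set {q i}" by (rule span_perp_set)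
    moreover have "\<not> q i \<perp> b" using pat_iff[of i i] i collinear_sym by blast
    ultimately show "b \<notin> span P L (p ` {..<m} - {b})" unfolding perp_set_def by blast
  qed (auto simp: span_superset)
qed

definition generated_by_at_most :: "nat \<Rightarrow> 'p set \<Rightarrow> bool" where
  "generated_by_at_most d S \<longleftrightarrow> (\<exists>T. finite T \<and> T \<subseteq> P \<and> card T \<le> d \<and> span P L T = S)"

lemma generated_by_at_most_mono: "generated_by_at_most d S \<Longrightarrow> d \<le> e \<Longrightarrow> generated_by_at_most e S"
  unfolding generated_by_at_most_def by auto

lemma singular_subspace_finitely_generated:
  assumes "polar_rank P L n" "singular_subspace P L S"
  shows "\<exists>T. finite T \<and> T \<subseteq> S \<and> card T \<le> n \<and> span P L T = S"
proof -
  obtain k where "k \<le> n" "proj_rank P L S k" using assms unfolding polar_rank_def by blast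
  then show ?thesis unfolding proj_rank_def by (metis order_trans order_refl)
qed

lemma generated_by_insert_noncollinear:
  assumes S: "singular_subspace P L S" and s: "s \<in> S" "\<not> b \<perp> s" and b: "b \<in> P"
    and gen: "generated_by_at_most d {x\<in>S. b \<perp> x}"
  shows "generated_by_at_most (Suc d) S"
proof -
  obtain T where T: "finite T" "T \<subseteq> P" "card T \<le> d" "span P L T = {x\<in>S. b \<perp> x}"
    using gen unfolding generated_by_at_most_def by blast
  have S': "subspace P L S" "pairwise_collinear S" using S unfolding singular_subspace_iff by blast+
  have sT: "insert s T \<subseteq> P" using subspace_subset[OF S'(1)] s(1) T(2) by blast
  have "S \<subseteq> span P L ({x\<in>S. b \<perp> x} \<union> {s})"
    using singular_subspace_generated_by_hyperplane[OF S' s(1) b s(2)] .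
  also have "\<dots> \<subseteq> span P L (insert s T)"
  proof (rule span_least[OF subspace_span[OF sT]])
    show "{x\<in>S. b \<perp> x} \<union> {s} \<subseteq> span P L (insert s T)"
      using T(4) span_mono[of T "insert s T"] span_superset[of "insert s T"] by blast
  qed
  finally have "S \<subseteq> span P L (insert s T)" .
  moreover have "span P L (insert s T) \<subseteq> S"
    using s(1) T(4) span_superset[of T] by (intro span_least[OF S'(1)]) blast
  moreover have "card (insert s T) \<le> Suc d" using T(1,3) by (simp add: card_insert_if)
  ultimately show ?thesis unfolding generated_by_at_most_def using T(1) sT
    by (intro exI[of _ "insert s T"]) auto
qed

lemma generated_in_perp_point:
  assumes R: "subspace P L R" and b: "b \<in> P"
    and IH: "\<And>S. singular_subspace P L S \<Longrightarrow> S \<subseteq> R \<inter> perp_set {a,b} \<Longrightarrow> generated_by_at_most d S"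
    and S: "singular_subspace P L S" "S \<subseteq> R \<inter> perp_set {a}"
  shows "generated_by_at_most (Suc d) S"
proof (cases "\<forall>x\<in>S. b \<perp> x")
  case True
  then have "S \<subseteq> R \<inter> perp_set {a,b}" using S(2) unfolding perp_set_def by auto
  then have "generated_by_at_most d S" by (rule IH[OF S(1)])
  then show ?thesis by (rule generated_by_at_most_mono) simp
next
  case False
  then obtain s where s: "s \<in> S" "\<not> b \<perp> s" by blast
  have S': "subspace P L S" "pairwise_collinear S" using S(1) unfolding singular_subspace_iff by blast+
  have "{x\<in>S. b \<perp> x} = S \<inter> perp_set {b}" using subspace_subset[OF S'(1)] unfolding perp_set_def by blast
  moreover have "pairwise_collinear {x\<in>S. b \<perp> x}" by (rule pairwise_collinear_subset[OF S'(2)]) blast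
  ultimately have "singular_subspace P L {x\<in>S. b \<perp> x}"
    using subspace_Int[OF S'(1) subspace_perp_set] unfolding singular_subspace_iff by simp
  moreover have "{x\<in>S. b \<perp> x} \<subseteq> R \<inter> perp_set {a,b}" using S(2) unfolding perp_set_def by auto
  ultimately have "generated_by_at_most d {x\<in>S. b \<perp> x}" by (rule IH)
  then show ?thesis by (rule generated_by_insert_noncollinear[OF S(1) s b])
qed

text \<open>The section of S by perp_set {a} is a hyperplane of the singular subspace spanned by a and it,
  which lies in R \<inter> perp_set {a}; hence it needs one generator less.\<close>
lemma hyperplane_section_generated:
  assumes rank: "polar_rank P L n" and R: "subspace P L R" and a: "a \<in> R"
    and gen: "\<And>S. singular_subspace P L S \<Longrightarrow> S \<subseteq> R \<inter> perp_set {a} \<Longrightarrow> generated_by_at_most (Suc d) S"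
    and S: "singular_subspace P L S" "S \<subseteq> R" and s: "s \<in> S" "\<not> a \<perp> s"
  shows "generated_by_at_most d {x\<in>S. a \<perp> x}"
proof -
  define A where "A = {x\<in>S. a \<perp> x}"
  have S': "subspace P L S" "pairwise_collinear S" using S(1) unfolding singular_subspace_iff by blast+
  have RP: "R \<subseteq> P" using subspace_subset[OF R] .
  have aP: "a \<in> P" and sP: "s \<in> P" using a s RP S(2) by blast+
  have coll_S: "\<And>x y. x \<in> S \<Longrightarrow> y \<in> S \<Longrightarrow> x \<perp> y" using S'(2) unfolding pairwise_collinear_def by blast
  obtain TS where TS: "finite TS" "TS \<subseteq> S" "span P L TS = S"
    using singular_subspace_finitely_generated[OF rank S(1)] by blast
  have "TS \<subseteq> P" using TS(2) S(2) RP by blast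
  then obtain TA where TA: "finite TA" "TA \<subseteq> P" "span P L TA = A"
    using hyperplane_section_fewer_generators[OF TS(1) _ _ aP _ s(2)] TS(3) S'(2) s(1)
    unfolding A_def by auto
  have TA_A: "TA \<subseteq> A" using span_superset[of TA] TA(3) by blast
  then have TA_S: "TA \<subseteq> S" and a_TA: "\<forall>x\<in>TA. a \<perp> x" unfolding A_def by blast+
  define S'' where "S'' = span P L (insert a TA)"
  have "pairwise_collinear TA" by (rule pairwise_collinear_subset[OF S'(2) TA_S])
  then have S''_sing: "singular_subspace P L S''" unfolding S''_def by (rule singular_span_insert[OF _ aP a_TA])
  have "insert a TA \<subseteq> R \<inter> perp_set {a}"
    using a aP TA_S TA(2) S(2) a_TA collinear_refl unfolding perp_set_def by auto
  then have "S'' \<subseteq> R \<inter> perp_set {a}"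
    unfolding S''_def by (rule span_least[OF subspace_Int[OF R subspace_perp_set]])
  then obtain T1 where T1: "finite T1" "T1 \<subseteq> P" "card T1 \<le> Suc d" "span P L T1 = S''"
    using gen[OF S''_sing] unfolding generated_by_at_most_def by blast
  have "TA \<subseteq> perp_set {a, s}" using TA_S TA(2) a_TA coll_S[OF s(1)] unfolding perp_set_def by blast
  moreover have "pairwise_collinear (span P L TA)"
    using pairwise_collinear_subset[OF S'(2)] TA(3) unfolding A_def by auto
  ultimately have section_sub: "{x \<in> S''. s \<perp> x} \<subseteq> A"
    using span_insert_inter_perp_subset[OF aP sP s(2) TA(1)] TA(3) unfolding S''_def by blast
  have "pairwise_collinear (span P L T1)" using S''_sing T1(4) unfolding singular_subspace_iff by blast
  moreover have "a \<in> span P L T1" using T1(4) span_superset[of "insert a TA"] unfolding S''_def by blast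
  moreover have "\<not> s \<perp> a" using s(2) collinear_sym by blast
  ultimately obtain T2 where T2: "finite T2" "T2 \<subseteq> P" "card T2 < card T1" "span P L T2 = {x \<in> S''. s \<perp> x}"
    using hyperplane_section_fewer_generators[OF T1(1,2) _ sP] T1(4) by blast
  have "A \<subseteq> S''" using span_mono[of TA "insert a TA"] TA(3) unfolding S''_def by blast
  moreover have "\<forall>x\<in>A. s \<perp> x" using coll_S[OF s(1)] unfolding A_def by blast
  ultimately have "span P L T2 = A" using section_sub T2(4) by blast
  then show ?thesis
    unfolding generated_by_at_most_def A_def using T2(1-3) T1(3) by (intro exI[of _ T2]) auto
qed

lemma generated_by_perp_pair_step:
  assumes rank: "polar_rank P L n" and R: "subspace P L R" and a: "a \<in> R" and b: "b \<in> P"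
    and IH: "\<And>S. singular_subspace P L S \<Longrightarrow> S \<subseteq> R \<inter> perp_set {a,b} \<Longrightarrow> generated_by_at_most d S"
    and S: "singular_subspace P L S" "S \<subseteq> R"
  shows "generated_by_at_most (Suc d) S"
proof -
  have in_perp_a: "generated_by_at_most (Suc d) S'"
    if "singular_subspace P L S'" "S' \<subseteq> R \<inter> perp_set {a}" for S'
    using generated_in_perp_point[OF R b IH that] .
  show ?thesis
  proof (cases "\<forall>x\<in>S. a \<perp> x")
    case True
    then have "S \<subseteq> R \<inter> perp_set {a}" using S subspace_subset unfolding singular_subspace_def perp_set_def by blast
    then show ?thesis using in_perp_a S(1) by blast
  next
    case False
    then obtain s where s: "s \<in> S" "\<not> a \<perp> s" by blast
    have "generated_by_at_most d {x\<in>S. a \<perp> x}"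
      using hyperplane_section_generated[OF rank R a in_perp_a S s] .
    then show ?thesis
      using generated_by_insert_noncollinear[OF S(1) s] a subspace_subset[OF R] by blast
  qed
qed

lemma disjoint_max_singular_perp_empty:
  assumes M: "max_singular P L M1" "max_singular P L M2" "M1 \<inter> M2 = {}"
    and sp: "M1 \<subseteq> span P L A" "M2 \<subseteq> span P L B"
  shows "perp_set (A \<union> B) = {}"
proof -
  have "x \<in> M1 \<and> x \<in> M2" if x: "x \<in> perp_set (A \<union> B)" for x
  proof -
    have "x \<in> P" "\<forall>b\<in>A. b \<perp> x" "\<forall>b\<in>B. b \<perp> x" using x unfolding perp_set_def by blast+
    then show ?thesis using max_singular_perp_span[OF M(1) sp(1)] max_singular_perp_span[OF M(2) sp(2)] by simp
  qed
  then show ?thesis using M(3) by blast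
qed

lemma singular_subspace_generated_by_frame_length:
  assumes rank: "polar_rank P L n" and M: "max_singular P L M1" "max_singular P L M2" "M1 \<inter> M2 = {}"
    and pat: "frame_pattern m p p'"
    and sp: "span P L (p ` {..<m}) = M1" "span P L (p' ` {..<m}) = M2"
    and S: "singular_subspace P L S"
  shows "generated_by_at_most m S"
proof -
  define R where "R j = perp_set (p ` {..<j} \<union> p' ` {..<j})" for j
  have M1': "subspace P L M1" "pairwise_collinear M1" using max_singular_subspace[OF M(1)] by simp_all
  have M2P: "M2 \<subseteq> P" using max_singular_subspace[OF M(2)] by (simp add: subspace_subset)
  have in_M: "p i \<in> M1" "p' i \<in> M2" if "i < m" for i
    using that span_superset[of "p ` {..<m}"] span_superset[of "p' ` {..<m}"] unfolding sp by auto
  have "R m = {}" unfolding R_def by (rule disjoint_max_singular_perp_empty[OF M]) (simp_all add: sp)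
  have step: "p j \<in> R j \<and> p' j \<in> P \<and> R (Suc j) = R j \<inter> perp_set {p j, p' j}" if j: "j < m" for j
  proof (intro conjI)
    have pjP: "p j \<in> P" using in_M(1)[OF j] subspace_subset[OF M1'(1)] by blast
    show "p' j \<in> P" using in_M(2)[OF j] M2P by blast
    have "p i \<perp> p j \<and> p' i \<perp> p j" if "i < j" for i
    proof
      have i: "i < m" using that j by simp
      show "p i \<perp> p j" using M1'(2) in_M(1)[OF i] in_M(1)[OF j] unfolding pairwise_collinear_def by blast
      have "p j \<perp> p' i" using pat i j that unfolding frame_pattern_def by simp
      then show "p' i \<perp> p j" by (rule collinear_sym)
    qed
    then show "p j \<in> R j" using pjP unfolding R_def perp_set_def by blast
    show "R (Suc j) = R j \<inter> perp_set {p j, p' j}" unfolding R_def perp_set_def lessThan_Suc by auto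
  qed
  have gen_R: "generated_by_at_most d S'" if "j + d = m" "singular_subspace P L S'" "S' \<subseteq> R j"
    for j d S'
    using that
  proof (induction d arbitrary: j S')
    case 0
    then have "S' = {}" using \<open>R m = {}\<close> by simp
    then show ?case unfolding generated_by_at_most_def using span_empty by auto
  next
    case (Suc d)
    have j: "j < m" using Suc.prems(1) by simp
    have pj: "p j \<in> R j" "p' j \<in> P" and R_Suc: "R (Suc j) = R j \<inter> perp_set {p j, p' j}"
      using step[OF j] by blast+
    have "subspace P L (R j)" unfolding R_def by (rule subspace_perp_set)
    moreover have "generated_by_at_most d S''"
      if "singular_subspace P L S''" "S'' \<subseteq> R j \<inter> perp_set {p j, p' j}" for S''
      using Suc.IH[of "Suc j" S''] Suc.prems(1) that R_Suc by simp
    ultimately show ?case using generated_by_perp_pair_step[OF rank _ pj] Suc.prems(2,3) by blast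
  qed
  have "R 0 = P" unfolding R_def perp_set_def by simp
  then show ?thesis using gen_R[of 0 m S] S subspace_subset unfolding singular_subspace_iff by simp
qed

definition partial_frame :: "'p set \<Rightarrow> 'p set \<Rightarrow> nat \<Rightarrow> (nat \<Rightarrow> 'p) \<Rightarrow> (nat \<Rightarrow> 'p) \<Rightarrow> bool" where
  "partial_frame M1 M2 k p p' \<longleftrightarrow> p ` {..<k} \<subseteq> M1 \<and> p' ` {..<k} \<subseteq> M2 \<and> frame_pattern k p p'"

lemma partial_frame_length_le_rank:
  assumes rank: "polar_rank P L n" and M: "max_singular P L M1" "M2 \<subseteq> P"
    and pf: "partial_frame M1 M2 k p p'"
  shows "k \<le> n"
proof -
  have "singular_subspace P L M1" using M(1) max_singular_def by blast
  then obtain T where T: "finite T" "T \<subseteq> M1" "card T \<le> n" "span P L T = M1"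
    using singular_subspace_finitely_generated[OF rank] by blast
  have "pairwise_collinear M1" "M1 \<subseteq> P" using M(1) max_singular_subspace subspace_subset by blast+
  then have "T \<subseteq> P" "pairwise_collinear (span P L T)" using T(2,4) by auto
  moreover have "p ` {..<k} \<subseteq> span P L T" "p' ` {..<k} \<subseteq> P" "frame_pattern k p p'"
    using pf T(4) M(2) unfolding partial_frame_def by auto
  ultimately have "k \<le> card T" using frame_pattern_length_le_card[OF T(1)] by blast
  then show ?thesis using T(3) by simp
qed

lemma partial_frame_extend:
  assumes pf: "partial_frame M1 M2 m p p'" and xy: "x \<in> M1" "y \<in> M2" "\<not> x \<perp> y"
    and x: "\<forall>i<m. p' i \<perp> x" and y: "\<forall>i<m. p i \<perp> y"
  shows "partial_frame M1 M2 (Suc m) (p(m := x)) (p'(m := y))"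
proof -
  have "frame_pattern m (p(m := x)) (p'(m := y))"
    using pf unfolding partial_frame_def frame_pattern_def by auto
  then show ?thesis
    using pf xy x y collinear_sym unfolding partial_frame_def frame_pattern_Suc by (auto simp: lessThan_Suc)
qed

lemma maximal_partial_frame_spans:
  assumes M: "max_singular P L M1" "max_singular P L M2" "M1 \<inter> M2 = {}"
    and pf: "partial_frame M1 M2 m p p'"
    and maximal: "\<And>k q q'. partial_frame M1 M2 k q q' \<Longrightarrow> k \<le> m"
  shows "span P L (p ` {..<m}) = M1 \<and> span P L (p' ` {..<m}) = M2"
proof -
  define H1 where "H1 = {x\<in>M1. \<forall>i<m. p' i \<perp> x}"
  define H2 where "H2 = {y\<in>M2. \<forall>i<m. p i \<perp> y}"
  have M1': "subspace P L M1" "pairwise_collinear M1" using max_singular_subspace[OF M(1)] by simp_all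
  have M2': "subspace P L M2" "pairwise_collinear M2" using max_singular_subspace[OF M(2)] by simp_all
  have P1: "M1 \<subseteq> P" and P2: "M2 \<subseteq> P" using M1'(1) M2'(1) by (simp_all add: subspace_subset)
  have pf': "p ` {..<m} \<subseteq> M1" "p' ` {..<m} \<subseteq> M2" "frame_pattern m p p'"
    using pf unfolding partial_frame_def by simp_all
  have cover1: "M1 \<subseteq> span P L (H1 \<union> p ` {..<m})"
    unfolding H1_def using singular_subspace_generated_by_pattern[OF M1' pf'(1) _ pf'(3)] pf'(2) P2
    by blast
  have cover2: "M2 \<subseteq> span P L (H2 \<union> p' ` {..<m})"
    unfolding H2_def using singular_subspace_generated_by_pattern[OF M2' pf'(2) _ frame_pattern_sym[OF pf'(3)]]
      pf'(1) P1 by blast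
  have "H1 = {}"
  proof (rule ccontr)
    assume "H1 \<noteq> {}"
    then obtain x where x: "x \<in> M1" "\<forall>i<m. p' i \<perp> x" unfolding H1_def by blast
    have "x \<notin> M2" using x(1) M(3) by blast
    moreover have "x \<in> P" using x(1) P1 by blast
    ultimately obtain y where y: "y \<in> H2 \<union> p' ` {..<m}" "\<not> y \<perp> x"
      using max_singular_perp_span[OF M(2) cover2] by blast
    then have "y \<in> H2" using x(2) by blast
    then have "y \<in> M2" "\<forall>i<m. p i \<perp> y" "\<not> x \<perp> y" using y(2) collinear_sym unfolding H2_def by blast+
    then have "partial_frame M1 M2 (Suc m) (p(m := x)) (p'(m := y))"
      using partial_frame_extend[OF pf x(1)] x(2) by blast
    then show False using maximal by fastforce
  qed
  have "H2 = {}"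
  proof (rule ccontr)
    assume "H2 \<noteq> {}"
    then obtain y where y: "y \<in> M2" "\<forall>i<m. p i \<perp> y" unfolding H2_def by blast
    have "M1 \<subseteq> span P L (p ` {..<m})" using cover1 \<open>H1 = {}\<close> by simp
    then have "y \<in> M1" using max_singular_perp_span[OF M(1)] y P2 by blast
    then show False using y(1) M(3) by blast
  qed
  have "span P L (p ` {..<m}) \<subseteq> M1" "span P L (p' ` {..<m}) \<subseteq> M2"
    using span_least[OF M1'(1) pf'(1)] span_least[OF M2'(1) pf'(2)] by simp_all
  then show ?thesis using cover1 cover2 \<open>H1 = {}\<close> \<open>H2 = {}\<close> by auto
qed

lemma disjoint_max_singular_frame:
  assumes rank: "polar_rank P L n" and M: "max_singular P L M1" "max_singular P L M2" "M1 \<inter> M2 = {}"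
  shows "\<exists>p p'. inj_on p {..<n} \<and> inj_on p' {..<n} \<and> is_basis P L M1 (p ` {..<n})
     \<and> is_basis P L M2 (p' ` {..<n}) \<and> frame_pattern n p p'"
proof -
  have P2: "M2 \<subseteq> P" using max_singular_subspace[OF M(2)] by (simp add: subspace_subset)
  define K where "K = {k. \<exists>p p'. partial_frame M1 M2 k p p'}"
  have "K \<subseteq> {..n}" using partial_frame_length_le_rank[OF rank M(1) P2] unfolding K_def by auto
  then have fin: "finite K" by (rule finite_subset) simp
  have "partial_frame M1 M2 0 p p" for p unfolding partial_frame_def frame_pattern_def by simp
  then have "K \<noteq> {}" unfolding K_def by blast
  define m where "m = Max K"
  obtain p p' where pf: "partial_frame M1 M2 m p p'"
    using Max_in[OF fin \<open>K \<noteq> {}\<close>] unfolding m_def K_def by blast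
  have "k \<le> m" if "partial_frame M1 M2 k q q'" for k q q'
    unfolding m_def using Max_ge[OF fin] that unfolding K_def by blast
  then have sp: "span P L (p ` {..<m}) = M1" "span P L (p' ` {..<m}) = M2"
    using maximal_partial_frame_spans[OF M pf] by blast+
  have pat: "frame_pattern m p p'" using pf unfolding partial_frame_def by simp
  obtain S where S: "singular_subspace P L S" "proj_rank P L S n" using rank unfolding polar_rank_def by blast
  obtain T where T: "finite T" "T \<subseteq> P" "card T \<le> m" "span P L T = S"
    using singular_subspace_generated_by_frame_length[OF rank M pat sp S(1)]
    unfolding generated_by_at_most_def by blast
  have "T \<subseteq> S" using T(4) span_superset[of T] by blast
  then have "n \<le> card T" using S(2) T(1,4) unfolding proj_rank_def by blast
  then have "m = n" using partial_frame_length_le_rank[OF rank M(1) P2 pf] T(3) by simp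
  then show ?thesis
    using frame_pattern_basis[OF pat] frame_pattern_basis[OF frame_pattern_sym[OF pat]] sp pat by auto
qed

end

section \<open>Maximal chains of nice subspaces\<close>

definition maximal_among :: "('a set set \<Rightarrow> bool) \<Rightarrow> 'a set set \<Rightarrow> bool" where
  "maximal_among Q C \<longleftrightarrow> (\<forall>C'. Q C' \<and> C \<subseteq> C' \<longrightarrow> C' = C)"

lemma wo_nice_chain_insert:
  assumes wo: "wo_nice_chain P L C" and ch: "nice_chain P L (insert Z C)"
  shows "wo_nice_chain P L (insert Z C)"
  unfolding wo_nice_chain_def
proof (intro conjI allI impI ch)
  fix D assume D: "D \<subseteq> insert Z C \<and> D \<noteq> {}"
  have least_C: "\<exists>X\<in>D'. \<forall>Y\<in>D'. X \<subseteq> Y" if "D' \<subseteq> C" "D' \<noteq> {}" for D'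
    using wo that unfolding wo_nice_chain_def by blast
  show "\<exists>X\<in>D. \<forall>Y\<in>D. X \<subseteq> Y"
  proof (cases "D - {Z} = {}")
    case True
    then have "D = {Z}" using D by blast
    then show ?thesis by blast
  next
    case False
    then obtain m where m: "m \<in> D - {Z}" "\<forall>Y\<in>D - {Z}. m \<subseteq> Y"
      using least_C[of "D - {Z}"] D by blast
    have "m \<in> insert Z C" using m(1) D by blast
    then have "Z \<subseteq> m \<or> m \<subseteq> Z" using ch unfolding nice_chain_def by blast
    then show ?thesis
    proof
      assume "Z \<subseteq> m"
      then show ?thesis using m by (cases "Z \<in> D") blast+
    next
      assume "m \<subseteq> Z"
      then show ?thesis using m by blast
    qed
  qed
qed

lemma maximal_wo_nice_chain_iff:
  assumes "wo_nice_chain P L C"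
  shows "maximal_among (wo_nice_chain P L) C \<longleftrightarrow> maximal_among (nice_chain P L) C"
proof
  assume max_wo: "maximal_among (wo_nice_chain P L) C"
  show "maximal_among (nice_chain P L) C"
    unfolding maximal_among_def
  proof (intro allI impI)
    fix C' assume C': "nice_chain P L C' \<and> C \<subseteq> C'"
    have "Z \<in> C" if "Z \<in> C'" for Z
    proof -
      have "nice_chain P L (insert Z C)" using C' that unfolding nice_chain_def by blast
      then have "insert Z C = C"
        using wo_nice_chain_insert[OF assms] max_wo unfolding maximal_among_def by blast
      then show ?thesis by blast
    qed
    then show "C' = C" using C' by blast
  qed
next
  assume "maximal_among (nice_chain P L) C"
  then show "maximal_among (wo_nice_chain P L) C"
    unfolding maximal_among_def wo_nice_chain_def by blast
qed

lemma maximal_nice_chain_insert: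
  assumes "maximal_among (nice_chain P L) C" "nice_chain P L C"
    and "nice_subspace P L Z" "\<forall>W\<in>C. Z \<subseteq> W \<or> W \<subseteq> Z"
  shows "Z \<in> C"
proof -
  have "nice_chain P L (insert Z C)" using assms(2-4) unfolding nice_chain_def by blast
  then show ?thesis using assms(1) unfolding maximal_among_def by blast
qed

lemma nice_subspace_superset:
  "nice_subspace P L X \<Longrightarrow> subspace P L Z \<Longrightarrow> X \<subseteq> Z \<Longrightarrow> nice_subspace P L Z"
  unfolding nice_subspace_def by blast

lemma subspace_Union_chain:
  assumes "\<forall>X\<in>D. subspace P L X" and "\<forall>X\<in>D. \<forall>Y\<in>D. X \<subseteq> Y \<or> Y \<subseteq> X"
  shows "subspace P L (\<Union>D)"
  unfolding subspace_def
proof (intro conjI ballI impI)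
  show "\<Union>D \<subseteq> P" using assms(1) unfolding subspace_def by blast
  fix l assume l: "l \<in> L" and "\<exists>a b. a \<noteq> b \<and> a \<in> l \<and> b \<in> l \<and> a \<in> \<Union>D \<and> b \<in> \<Union>D"
  then obtain a b Xa Xb where ab: "a \<noteq> b" "a \<in> l" "b \<in> l" "Xa \<in> D" "Xb \<in> D" "a \<in> Xa" "b \<in> Xb"
    by blast
  then have "\<exists>X\<in>D. a \<in> X \<and> b \<in> X" using assms(2) by blast
  then show "l \<subseteq> \<Union>D" using assms(1) l ab(1-3) unfolding subspace_def by blast
qed

lemma is_frame_mono:
  assumes "is_frame P L n X p p'" "X \<subseteq> Y"
  shows "is_frame P L n Y p p'"
proof -
  obtain M1 M2 where M: "max_singular P L M1" "max_singular P L M2" "M1 \<subseteq> X" "M2 \<subseteq> X" "M1 \<inter> M2 = {}"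
    "inj_on p {..<n}" "inj_on p' {..<n}" "is_basis P L M1 (p ` {..<n})" "is_basis P L M2 (p' ` {..<n})"
    "\<forall>i<n. \<forall>j<n. perp P L (p i) (p' j) \<longleftrightarrow> i \<noteq> j"
    using assms(1) unfolding is_frame_def by blast
  have "M1 \<subseteq> Y" "M2 \<subseteq> Y" using M(3,4) assms(2) by blast+
  with M show ?thesis unfolding is_frame_def by blast
qed

lemma is_frame_points:
  assumes "is_frame P L n X p p'"
  shows "p ` {..<n} \<union> p' ` {..<n} \<subseteq> X"
proof -
  obtain M1 M2 where "M1 \<subseteq> X" "M2 \<subseteq> X" "is_basis P L M1 (p ` {..<n})" "is_basis P L M2 (p' ` {..<n})"
    using assms unfolding is_frame_def by blast
  then show ?thesis unfolding is_basis_def by blast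
qed

definition frames_span_least :: "'p set \<Rightarrow> 'p set set \<Rightarrow> nat \<Rightarrow> 'p set set \<Rightarrow> bool" where
  "frames_span_least P L n C \<longleftrightarrow> (\<forall>X0\<in>C. (\<forall>Y\<in>C. X0 \<subseteq> Y) \<longrightarrow>
     (\<forall>p p'. is_frame P L n X0 p p' \<longrightarrow> span P L (p ` {..<n} \<union> p' ` {..<n}) = X0))"

definition successor_in :: "'a set set \<Rightarrow> 'a set \<Rightarrow> 'a set \<Rightarrow> bool" where
  "successor_in C X Y \<longleftrightarrow> X \<subset> Y \<and> (\<forall>Z\<in>C. X \<subset> Z \<longrightarrow> Y \<subseteq> Z)"

definition successors_cover :: "'p set \<Rightarrow> 'p set set \<Rightarrow> 'p set set \<Rightarrow> bool" where
  "successors_cover P L C \<longleftrightarrow>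
     (\<forall>X\<in>C. \<forall>Y\<in>C. successor_in C X Y \<longrightarrow> \<not> (\<exists>Z. subspace P L Z \<and> X \<subset> Z \<and> Z \<subset> Y))"

definition limit_in :: "'a set set \<Rightarrow> 'a set \<Rightarrow> bool" where
  "limit_in C Y \<longleftrightarrow> (\<exists>X\<in>C. X \<subset> Y) \<and> \<not> (\<exists>X\<in>C. X \<subset> Y \<and> \<not> (\<exists>Z\<in>C. X \<subset> Z \<and> Z \<subset> Y))"

definition limits_are_unions :: "'a set set \<Rightarrow> bool" where
  "limits_are_unions C \<longleftrightarrow> (\<forall>Y\<in>C. limit_in C Y \<longrightarrow> Y = \<Union> {X\<in>C. X \<subset> Y})"

lemma limits_are_unions_maximal_chain:
  assumes max: "maximal_among (nice_chain P L) C" and ch: "nice_chain P L C"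
  shows "limits_are_unions C"
  unfolding limits_are_unions_def
proof (intro ballI impI)
  fix Y assume Y: "Y \<in> C" and lim: "limit_in C Y"
  define U where "U = \<Union> {X\<in>C. X \<subset> Y}"
  have sub: "\<forall>X\<in>C. subspace P L X" and cmp: "\<forall>X\<in>C. \<forall>W\<in>C. X \<subseteq> W \<or> W \<subseteq> X"
    using ch unfolding nice_chain_def nice_subspace_def by blast+
  obtain X1 where X1: "X1 \<in> C" "X1 \<subset> Y" using lim unfolding limit_in_def by blast
  have "\<forall>X\<in>{X\<in>C. X \<subset> Y}. subspace P L X" "\<forall>X\<in>{X\<in>C. X \<subset> Y}. \<forall>W\<in>{X\<in>C. X \<subset> Y}. X \<subseteq> W \<or> W \<subseteq> X"
    using sub cmp by simp_all
  then have "subspace P L U" unfolding U_def by (rule subspace_Union_chain)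
  moreover have "nice_subspace P L X1" using ch X1(1) unfolding nice_chain_def by blast
  moreover have "X1 \<subseteq> U" unfolding U_def using X1 by blast
  ultimately have "nice_subspace P L U" using nice_subspace_superset by blast
  moreover have "U \<subseteq> W \<or> W \<subseteq> U" if W: "W \<in> C" for W
  proof (cases "W \<subset> Y")
    case True then show ?thesis unfolding U_def using W by blast
  next
    case False
    then have "Y \<subseteq> W" using cmp W Y by blast
    then show ?thesis unfolding U_def by blast
  qed
  ultimately have "U \<in> C" using maximal_nice_chain_insert[OF max ch] by blast
  show "Y = U"
  proof (rule ccontr)
    assume "Y \<noteq> U"
    then have "U \<subset> Y" unfolding U_def by blast
    moreover have "\<not> (\<exists>Z\<in>C. U \<subset> Z \<and> Z \<subset> Y)" unfolding U_def by blast
    ultimately show False using lim \<open>U \<in> C\<close> unfolding limit_in_def by blast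
  qed
qed

lemma successors_cover_maximal_chain:
  assumes max: "maximal_among (nice_chain P L) C" and ch: "nice_chain P L C"
  shows "successors_cover P L C"
  unfolding successors_cover_def
proof (intro ballI impI notI)
  fix X Y assume X: "X \<in> C" and Y: "Y \<in> C" and succ: "successor_in C X Y"
    and "\<exists>Z. subspace P L Z \<and> X \<subset> Z \<and> Z \<subset> Y"
  then obtain Z where Z: "subspace P L Z" "X \<subset> Z" "Z \<subset> Y" by blast
  have cmp: "\<forall>X\<in>C. \<forall>W\<in>C. X \<subseteq> W \<or> W \<subseteq> X" using ch unfolding nice_chain_def by blast
  have succ_le: "\<And>W. W \<in> C \<Longrightarrow> X \<subset> W \<Longrightarrow> Y \<subseteq> W" using succ unfolding successor_in_def by blast
  have "nice_subspace P L X" using ch X unfolding nice_chain_def by blast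
  then have "nice_subspace P L Z" by (rule nice_subspace_superset[OF _ Z(1)]) (use Z(2) in blast)
  moreover have "\<forall>W\<in>C. Z \<subseteq> W \<or> W \<subseteq> Z"
  proof
    fix W assume W: "W \<in> C"
    show "Z \<subseteq> W \<or> W \<subseteq> Z"
    proof (cases "W \<subseteq> X")
      case True then show ?thesis using Z(2) by blast
    next
      case False
      then have "X \<subset> W" using cmp X W by blast
      then have "Y \<subseteq> W" by (rule succ_le[OF W])
      then show ?thesis using Z(3) by blast
    qed
  qed
  ultimately have "Z \<in> C" by (rule maximal_nice_chain_insert[OF max ch])
  then have "Y \<subseteq> Z" using succ_le Z(2) by blast
  then show False using Z(3) by blast
qed

lemma no_subspace_in_gap:
  assumes succ: "successors_cover P L C" and lim: "limits_are_unions C"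
    and Z: "subspace P L Z" "\<forall>W\<in>C. Z \<subset> W \<or> W \<subset> Z"
    and W: "W \<in> C" "W \<subset> Z" and Y: "Y \<in> C" "Z \<subset> Y" "\<forall>W\<in>C. Z \<subset> W \<longrightarrow> Y \<subseteq> W"
  shows False
proof -
  have below_Z: "X \<subset> Z" if "X \<in> C" "X \<subset> Y" for X
  proof -
    have "\<not> Z \<subset> X" using Y(3) that by blast
    then show ?thesis using Z(2) that(1) by blast
  qed
  show False
  proof (cases "\<exists>X\<in>C. X \<subset> Y \<and> \<not> (\<exists>Z'\<in>C. X \<subset> Z' \<and> Z' \<subset> Y)")
    case True
    then obtain X where X: "X \<in> C" "X \<subset> Y" "\<not> (\<exists>Z'\<in>C. X \<subset> Z' \<and> Z' \<subset> Y)" by blast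
    have XZ: "X \<subset> Z" by (rule below_Z[OF X(1,2)])
    have "Y \<subseteq> Z'" if Z': "Z' \<in> C" "X \<subset> Z'" for Z'
    proof (rule ccontr)
      assume "\<not> Y \<subseteq> Z'"
      then have "\<not> Z \<subset> Z'" using Y(3) Z'(1) by blast
      then have "Z' \<subset> Z" using Z(2) Z'(1) by blast
      then have "Z' \<subset> Y" using Y(2) by (rule psubset_trans)
      then show False using X(3) Z' by blast
    qed
    then have "successor_in C X Y" unfolding successor_in_def using X(2) by blast
    then have "\<not> (\<exists>Z. subspace P L Z \<and> X \<subset> Z \<and> Z \<subset> Y)"
      using succ X(1) Y(1) unfolding successors_cover_def by blast
    then show False using Z(1) XZ Y(2) by blast
  next
    case False
    moreover have "W \<subset> Y" using W(2) Y(2) by (rule psubset_trans)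
    ultimately have "limit_in C Y" unfolding limit_in_def using W(1) by blast
    then have "Y = \<Union> {X\<in>C. X \<subset> Y}" using lim Y(1) unfolding limits_are_unions_def by blast
    also have "\<dots> \<subseteq> Z" using below_Z by blast
    finally show False using Y(2) by blast
  qed
qed
context nondegenerate_polar_space
begin

lemma frames_span_least_maximal_chain:
  assumes max: "maximal_among (nice_chain P L) C" and ch: "nice_chain P L C"
  shows "frames_span_least P L n C"
  unfolding frames_span_least_def
proof (intro ballI impI allI)
  fix X0 p p' assume X0: "X0 \<in> C" "\<forall>Y\<in>C. X0 \<subseteq> Y" and fr: "is_frame P L n X0 p p'"
  define F where "F = p ` {..<n} \<union> p' ` {..<n}"
  have sub_X0: "subspace P L X0" using ch X0(1) unfolding nice_chain_def nice_subspace_def by blast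
  have FX: "F \<subseteq> X0" unfolding F_def by (rule is_frame_points[OF fr])
  then have "F \<subseteq> P" using subspace_subset[OF sub_X0] by blast
  then have sub_F: "subspace P L (span P L F)" by (rule subspace_span)
  obtain M1 M2 where M: "max_singular P L M1" "max_singular P L M2" "M1 \<inter> M2 = {}"
    "is_basis P L M1 (p ` {..<n})" "is_basis P L M2 (p' ` {..<n})"
    using fr unfolding is_frame_def by blast
  have "M1 \<subseteq> span P L F" "M2 \<subseteq> span P L F"
    using M(4,5) span_mono[of "p ` {..<n}" F] span_mono[of "p' ` {..<n}" F]
    unfolding is_basis_def F_def by auto
  then have "nice_subspace P L (span P L F)" unfolding nice_subspace_def using sub_F M(1-3) by blast
  moreover have span_X0: "span P L F \<subseteq> X0" using span_least[OF sub_X0 FX] .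
  then have "\<forall>W\<in>C. span P L F \<subseteq> W \<or> W \<subseteq> span P L F" using X0(2) by blast
  ultimately have "span P L F \<in> C" by (rule maximal_nice_chain_insert[OF max ch])
  then have "X0 \<subseteq> span P L F" using X0(2) by blast
  then show "span P L (p ` {..<n} \<union> p' ` {..<n}) = X0" using span_X0 unfolding F_def by blast
qed

lemma nice_subspace_has_frame:
  assumes rank: "polar_rank P L n" and Z: "nice_subspace P L Z"
  shows "\<exists>p p'. is_frame P L n Z p p'"
proof -
  obtain M1 M2 where M: "max_singular P L M1" "max_singular P L M2" "M1 \<subseteq> Z" "M2 \<subseteq> Z" "M1 \<inter> M2 = {}"
    using Z unfolding nice_subspace_def by blast
  obtain p p' where "inj_on p {..<n}" "inj_on p' {..<n}" "is_basis P L M1 (p ` {..<n})"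
    "is_basis P L M2 (p' ` {..<n})" "frame_pattern n p p'"
    using disjoint_max_singular_frame[OF rank M(1,2,5)] by blast
  then have "is_frame P L n Z p p'"
    unfolding is_frame_def frame_pattern_def using M by (intro exI[of _ M1] exI[of _ M2]) simp
  then show ?thesis by blast
qed

lemma frame_spanned_nice_subspace_below:
  assumes rank: "polar_rank P L n"
    and X0: "\<forall>p p'. is_frame P L n X0 p p' \<longrightarrow> span P L (p ` {..<n} \<union> p' ` {..<n}) = X0"
    and Z: "nice_subspace P L Z" "Z \<subseteq> X0"
  shows "X0 \<subseteq> Z"
proof -
  obtain p p' where fr: "is_frame P L n Z p p'" using nice_subspace_has_frame[OF rank Z(1)] by blast
  then have "span P L (p ` {..<n} \<union> p' ` {..<n}) = X0" using X0 is_frame_mono[OF fr Z(2)] by blast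
  moreover have "subspace P L Z" using Z(1) unfolding nice_subspace_def by blast
  then have "span P L (p ` {..<n} \<union> p' ` {..<n}) \<subseteq> Z" by (rule span_least[OF _ is_frame_points[OF fr]])
  ultimately show ?thesis by blast
qed

lemma maximal_chain_if_conditions:
  assumes rank: "polar_rank P L n" and wo: "wo_nice_chain P L C" and PC: "P \<in> C"
    and frames: "frames_span_least P L n C" and succ: "successors_cover P L C"
    and lim: "limits_are_unions C"
  shows "maximal_among (nice_chain P L) C"
  unfolding maximal_among_def
proof (intro allI impI)
  have least: "\<exists>X\<in>D. \<forall>Y\<in>D. X \<subseteq> Y" if "D \<subseteq> C" "D \<noteq> {}" for D
    using wo that unfolding wo_nice_chain_def by blast
  fix C' assume C': "nice_chain P L C' \<and> C \<subseteq> C'"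
  have "Z \<in> C" if ZC': "Z \<in> C'" for Z
  proof (rule ccontr)
    assume "Z \<notin> C"
    have Z: "nice_subspace P L Z" using C' ZC' unfolding nice_chain_def by blast
    then have sub_Z: "subspace P L Z" unfolding nice_subspace_def by blast
    have cmp: "\<forall>W\<in>C. Z \<subset> W \<or> W \<subset> Z"
    proof
      fix W assume "W \<in> C"
      then have "Z \<subseteq> W \<or> W \<subseteq> Z" "Z \<noteq> W" using C' ZC' \<open>Z \<notin> C\<close> unfolding nice_chain_def by blast+
      then show "Z \<subset> W \<or> W \<subset> Z" by blast
    qed
    have "Z \<subset> P" using subspace_subset[OF sub_Z] PC \<open>Z \<notin> C\<close> by blast
    then have "{W\<in>C. Z \<subset> W} \<noteq> {}" using PC by blast
    with least[of "{W\<in>C. Z \<subset> W}"] obtain Y where "Y \<in> {W\<in>C. Z \<subset> W}" "\<forall>W\<in>{W\<in>C. Z \<subset> W}. Y \<subseteq> W"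
      by blast
    then have Y: "Y \<in> C" "Z \<subset> Y" "\<forall>W\<in>C. Z \<subset> W \<longrightarrow> Y \<subseteq> W" by simp_all
    show False
    proof (cases "\<exists>W\<in>C. W \<subset> Z")
      case True
      then show False using no_subspace_in_gap[OF succ lim sub_Z cmp _ _ Y] by blast
    next
      case False
      have "C \<noteq> {}" using PC by blast
      with least[OF order_refl] obtain X0 where X0: "X0 \<in> C" "\<forall>W\<in>C. X0 \<subseteq> W" by blast
      then have "Z \<subset> X0" using False cmp by blast
      moreover have "\<forall>p p'. is_frame P L n X0 p p' \<longrightarrow> span P L (p ` {..<n} \<union> p' ` {..<n}) = X0"
        using frames X0 unfolding frames_span_least_def by blast
      ultimately have "X0 \<subseteq> Z" using frame_spanned_nice_subspace_below[OF rank _ Z] by blast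
      then show False using \<open>Z \<subset> X0\<close> by blast
    qed
  qed
  then show "C' = C" using C' by blast
qed

lemma maximal_nice_chain_iff:
  assumes rank: "polar_rank P L n" and wo: "wo_nice_chain P L C" and PC: "P \<in> C"
  shows "maximal_among (nice_chain P L) C \<longleftrightarrow>
    frames_span_least P L n C \<and> successors_cover P L C \<and> limits_are_unions C"
proof
  have ch: "nice_chain P L C" using wo unfolding wo_nice_chain_def by blast
  assume max: "maximal_among (nice_chain P L) C"
  show "frames_span_least P L n C \<and> successors_cover P L C \<and> limits_are_unions C"
    using frames_span_least_maximal_chain[OF max ch] successors_cover_maximal_chain[OF max ch]
      limits_are_unions_maximal_chain[OF max ch] by blast
next
  assume "frames_span_least P L n C \<and> successors_cover P L C \<and> limits_are_unions C"
  then show "maximal_among (nice_chain P L) C" using maximal_chain_if_conditions[OF rank wo PC] by blast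
qed

end

theorem lemma3:
  fixes P :: "'p set" and L :: "'p set set" and n :: nat and C :: "'p set set"
  assumes "polar_space P L" and "non_degenerate P L" and "polar_rank P L n" and "2 \<le> n"
    and "\<forall>l\<in>L. \<not> thin_line l"
    and "wo_nice_chain P L C" and "P \<in> C"
  shows "((\<forall>C'. wo_nice_chain P L C' \<and> C \<subseteq> C' \<longrightarrow> C' = C)
           \<longleftrightarrow> (\<forall>C'. nice_chain P L C' \<and> C \<subseteq> C' \<longrightarrow> C' = C))
       \<and> ((\<forall>C'. nice_chain P L C' \<and> C \<subseteq> C' \<longrightarrow> C' = C)
           \<longleftrightarrow> ((\<forall>X0\<in>C. (\<forall>Y\<in>C. X0 \<subseteq> Y) \<longrightarrow>
                    (\<forall>p p'. is_frame P L n X0 p p' \<longrightarrow> span P L (p ` {..<n} \<union> p' ` {..<n}) = X0))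
               \<and> (\<forall>X\<in>C. \<forall>Y\<in>C. X \<subset> Y \<and> (\<forall>Z\<in>C. X \<subset> Z \<longrightarrow> Y \<subseteq> Z) \<longrightarrow>
                    (\<not> (\<exists>Z. subspace P L Z \<and> X \<subset> Z \<and> Z \<subset> Y)))
               \<and> (\<forall>Y\<in>C. (\<exists>X\<in>C. X \<subset> Y) \<and> \<not> (\<exists>X\<in>C. X \<subset> Y \<and> \<not> (\<exists>Z\<in>C. X \<subset> Z \<and> Z \<subset> Y)) \<longrightarrow>
                    Y = \<Union> {X\<in>C. X \<subset> Y})))"
proof -
  interpret nondegenerate_polar_space P L using assms(1,2) by unfold_locales
  show ?thesis
    using maximal_wo_nice_chain_iff[OF assms(6)] maximal_nice_chain_iff[OF assms(3,6,7)]
    unfolding maximal_among_def frames_span_least_def successors_cover_def successor_in_def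
      limits_are_unions_def limit_in_def
    by (rule conjI)
qed

end
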